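(* Let $X=\{x_1,\dots,x_n\}$. Every partial shelling $\sigma_1,\dots,\sigma_m$ of the cross-polytope $O_n$ defines an isometric ordering of the corresponding vertices $c_1,\dots,c_m$ of the cube $2^X$, i.e. each set $\{c_1,\dots,c_j\}$, $1\le j\le m$, is isometric. Conversely, if $C\subseteq 2^X$ is an isometric class, then any ordering $c_1,\dots,c_m$ of $C$ in which every set $\{c_1,\dots,c_j\}$ is isometric defines (via the corresponding facets) a partial shelling of $O_n$.
   Context: Let $\pm X=\{+x_1,-x_1,\dots,+x_n,-x_n\}$. The $n$-dimensional cross-polytope $O_n$ is the simplicial complex on $\pm X$ whose facets are the $2^n$ sets $\sigma\subseteq\pm X$ containing exactly one of $+x_i,-x_i$ for each $i$. Facets correspond bijectively to subsets $c\subseteq X$ via $c=\{x_i:+x_i\in\sigma\}$. A partial shelling of $O_n$ is a sequence $\sigma_1,\dots,\sigma_m$ of distinct facets such that for every $2\le j\le m$, the family $2^{\sigma_j}\cap\bigcup_{i<j}2^{\sigma_i}$ is a pure simplicial complex whose inclusion-maximal sets all have size $n-1$ (equivalently: for all $i<j$ there is $k<j$ with $\sigma_i\cap\sigma_j\subseteq\sigma_k\cap\sigma_j$ and $|\sigma_k\cap\sigma_j|=n-1$). A class $C\subseteq 2^X$ is isometric if the graph on $C$ joining sets at Hamming distance $1$ is connected and its graph distance equals the Hamming distance $|c\Delta c'|$ for all $c,c'\in C$. *)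

theory Defs
  imports Main
begin

text \<open>Signed ground set: (x, True) is +x, (x, False) is -x.\<close>

definition cross_facets :: "'a set \<Rightarrow> ('a \<times> bool) set set" where
  "cross_facets X = {\<sigma>. \<sigma> \<subseteq> X \<times> UNIV \<and> (\<forall>x\<in>X. ((x,True) \<in> \<sigma>) \<noteq> ((x,False) \<in> \<sigma>))}"

definition facet_of :: "'a set \<Rightarrow> 'a set \<Rightarrow> ('a \<times> bool) set" where
  "facet_of X c = {(x,True) | x. x \<in> X \<and> x \<in> c} \<union> {(x,False) | x. x \<in> X \<and> x \<notin> c}"

definition vertex_of :: "('a \<times> bool) set \<Rightarrow> 'a set" where
  "vertex_of \<sigma> = {x. (x,True) \<in> \<sigma>}"

definition pure_codim1 :: "nat \<Rightarrow> 'b set set \<Rightarrow> bool" where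
  "pure_codim1 n F = (\<forall>S\<in>F. (\<forall>T\<in>F. S \<subseteq> T \<longrightarrow> T = S) \<longrightarrow> card S = n - 1)"

definition partial_shelling :: "'a set \<Rightarrow> ('a \<times> bool) set list \<Rightarrow> bool" where
  "partial_shelling X \<sigma>s =
     (distinct \<sigma>s \<and> set \<sigma>s \<subseteq> cross_facets X \<and>
      (\<forall>j. 1 \<le> j \<and> j < length \<sigma>s \<longrightarrow>
          pure_codim1 (card X) (Pow (\<sigma>s ! j) \<inter> (\<Union>i<j. Pow (\<sigma>s ! i)))))"

definition hamming_walk :: "'a set set \<Rightarrow> 'a set list \<Rightarrow> bool" where
  "hamming_walk C ps = (ps \<noteq> [] \<and> set ps \<subseteq> C \<and>
     (\<forall>i. Suc i < length ps \<longrightarrow> card ((ps ! i) - (ps ! Suc i) \<union> ((ps ! Suc i) - (ps ! i))) = 1))"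

definition connected_by :: "'a set set \<Rightarrow> 'a set \<Rightarrow> 'a set \<Rightarrow> nat \<Rightarrow> bool" where
  "connected_by C c c' k = (\<exists>ps. hamming_walk C ps \<and> hd ps = c \<and> last ps = c' \<and> length ps = Suc k)"

definition graph_dist :: "'a set set \<Rightarrow> 'a set \<Rightarrow> 'a set \<Rightarrow> nat" where
  "graph_dist C c c' = (LEAST k. connected_by C c c' k)"

definition isometric :: "'a set set \<Rightarrow> bool" where
  "isometric C = (\<forall>c\<in>C. \<forall>c'\<in>C. (\<exists>k. connected_by C c c' k) \<and>
      graph_dist C c c' = card (c - c' \<union> (c' - c)))"

end

theory Submission
  imports Defs
begin

text \<open>
  Write \<open>\<sigma>\<^sub>c\<close> for the facet of the vertex \<open>c\<close>. The face \<open>\<sigma>\<^sub>a \<inter> \<sigma>\<^sub>c\<close> consists of the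
  coordinates on which \<open>a\<close> and \<open>c\<close> agree, so it has \<open>n - |a \<Delta> c|\<close> elements, and
  \<open>\<sigma>\<^sub>a \<inter> \<sigma>\<^sub>c \<subseteq> \<sigma>\<^sub>b \<inter> \<sigma>\<^sub>c\<close> iff \<open>b \<Delta> c \<subseteq> a \<Delta> c\<close>. Hence adding \<open>\<sigma>\<^sub>c\<close> to the facets of a class
  \<open>C\<close> keeps the shelling condition iff every \<open>a \<in> C\<close> admits a neighbour \<open>b \<in> C\<close> of \<open>c\<close>
  with \<open>b \<Delta> c \<subseteq> a \<Delta> c\<close>, i.e. lying on a geodesic of the cube from \<open>c\<close> to \<open>a\<close>.
  This is also exactly what it takes for \<open>C \<union> {c}\<close> to stay isometric when \<open>C\<close> is:
  such a \<open>b\<close> followed by a geodesic from \<open>b\<close> to \<open>a\<close> in \<open>C\<close> is a geodesic from \<open>c\<close>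
  to \<open>a\<close>, and conversely the first step of a geodesic from \<open>c\<close> to \<open>a\<close> in \<open>C \<union> {c}\<close> is
  such a \<open>b\<close>.
\<close>

lemma sym_diff_commute: "sym_diff A B = sym_diff B A"
  by blast

lemma sym_diff_eq_empty_iff: "sym_diff A B = {} \<longleftrightarrow> A = B"
  by auto

lemma hamming_walk_iff_successively:
  "hamming_walk C ps \<longleftrightarrow>
     ps \<noteq> [] \<and> set ps \<subseteq> C \<and> successively (\<lambda>a b. card (sym_diff a b) = 1) ps"
  by (simp add: hamming_walk_def successively_conv_nth)

lemma connected_by_in: "connected_by C c d k \<Longrightarrow> c \<in> C \<and> d \<in> C"
  unfolding connected_by_def hamming_walk_def by (metis hd_in_set last_in_set subsetD)

lemma connected_by_refl: "c \<in> C \<Longrightarrow> connected_by C c c 0"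
  unfolding connected_by_def hamming_walk_iff_successively by (intro exI[of _ "[c]"]) auto

lemma connected_by_Suc_iff:
  "connected_by C c e (Suc k) \<longleftrightarrow> c \<in> C \<and> (\<exists>d. card (sym_diff c d) = 1 \<and> connected_by C d e k)"
proof
  assume "connected_by C c e (Suc k)"
  then obtain ps where ps: "hamming_walk C (c # ps)" "last (c # ps) = e" "length ps = Suc k"
    unfolding connected_by_def by (metis length_Suc_conv list.sel(1))
  then have "ps \<noteq> []" by auto
  with ps show "c \<in> C \<and> (\<exists>d. card (sym_diff c d) = 1 \<and> connected_by C d e k)"
    unfolding connected_by_def hamming_walk_iff_successively successively_Cons by auto
next
  assume "c \<in> C \<and> (\<exists>d. card (sym_diff c d) = 1 \<and> connected_by C d e k)"
  then obtain d ps where "c \<in> C" "card (sym_diff c d) = 1" "hamming_walk C ps"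
      "hd ps = d" "last ps = e" "length ps = Suc k"
    unfolding connected_by_def by blast
  then show "connected_by C c e (Suc k)"
    unfolding connected_by_def hamming_walk_iff_successively
    by (intro exI[of _ "c # ps"]) (auto simp: successively_Cons)
qed

lemma connected_by_mono: "C \<subseteq> D \<Longrightarrow> connected_by C c d k \<Longrightarrow> connected_by D c d k"
  unfolding connected_by_def hamming_walk_def by blast

lemma connected_by_commute: "connected_by C c d k \<Longrightarrow> connected_by C d c k"
proof -
  assume "connected_by C c d k"
  then obtain ps where "hamming_walk C ps" "hd ps = c" "last ps = d" "length ps = Suc k"
    unfolding connected_by_def by blast
  then show "connected_by C d c k"
    unfolding connected_by_def hamming_walk_iff_successively
    by (intro exI[of _ "rev ps"]) (simp add: hd_rev last_rev sym_diff_commute)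
qed

lemma connected_by_card_sym_diff:
  "connected_by C c d k \<Longrightarrow> finite (sym_diff c d) \<and> card (sym_diff c d) \<le> k"
proof (induction k arbitrary: c)
  case 0
  then have "c = d" unfolding connected_by_def by (auto simp: length_Suc_conv)
  then show ?case by simp
next
  case (Suc k)
  then obtain p where p: "card (sym_diff c p) = 1" "connected_by C p d k"
    using connected_by_Suc_iff by blast
  have fin_cp: "finite (sym_diff c p)" using p(1) by (metis card.infinite zero_neq_one)
  have fin_pd: "finite (sym_diff p d)" and card_pd: "card (sym_diff p d) \<le> k"
    using Suc.IH[OF p(2)] by auto
  have sub: "sym_diff c d \<subseteq> sym_diff c p \<union> sym_diff p d" by blast
  then have "finite (sym_diff c d)" using fin_cp fin_pd by (meson finite_UnI finite_subset)
  moreover have "card (sym_diff c d) \<le> card (sym_diff c p) + card (sym_diff p d)"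
    using card_mono[OF _ sub] card_Un_le fin_cp fin_pd by (meson finite_UnI le_trans)
  ultimately show ?case using p(1) card_pd by simp
qed

lemma isometric_iff:
  "isometric C \<longleftrightarrow> (\<forall>c\<in>C. \<forall>c'\<in>C. connected_by C c c' (card (sym_diff c c')))"
  unfolding isometric_def graph_dist_def
proof (intro ball_cong refl iffI)
  fix c c'
  assume "(\<exists>k. connected_by C c c' k) \<and> (LEAST k. connected_by C c c' k) = card (sym_diff c c')"
  then show "connected_by C c c' (card (sym_diff c c'))" by (metis LeastI_ex)
next
  fix c c'
  assume walk: "connected_by C c c' (card (sym_diff c c'))"
  then have "card (sym_diff c c') \<le> (LEAST k. connected_by C c c' k)"
    using connected_by_card_sym_diff LeastI by metis
  with walk show "(\<exists>k. connected_by C c c' k) \<and> (LEAST k. connected_by C c c' k) = card (sym_diff c c')"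
    by (auto intro: antisym Least_le)
qed

definition steps_towards :: "'a set set \<Rightarrow> 'a set \<Rightarrow> bool" where
  "steps_towards C c \<longleftrightarrow>
     (\<forall>a\<in>C. \<exists>b\<in>C. card (sym_diff b c) = 1 \<and> sym_diff b c \<subseteq> sym_diff a c)"

lemma isometric_insert:
  assumes iso: "isometric C" and steps: "steps_towards C c"
  shows "isometric (insert c C)"
proof -
  have from_c: "connected_by (insert c C) c a (card (sym_diff c a))" if a: "a \<in> C" for a
  proof -
    obtain b where b: "b \<in> C" "card (sym_diff b c) = 1" "sym_diff b c \<subseteq> sym_diff a c"
      using steps a unfolding steps_towards_def by blast
    have walk_ba: "connected_by C b a (card (sym_diff b a))"
      using iso a b(1) unfolding isometric_iff by blast
    have fin_bc: "finite (sym_diff b c)" using b(2) by (metis card.infinite zero_neq_one)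
    have fin_ba: "finite (sym_diff b a)" using connected_by_card_sym_diff[OF walk_ba] by blast
    have "sym_diff a c \<subseteq> sym_diff b a \<union> sym_diff b c" by blast
    then have fin_ac: "finite (sym_diff a c)" using fin_ba fin_bc by (meson finite_UnI finite_subset)
    have "sym_diff b a = sym_diff a c - sym_diff b c" using b(3) by blast
    then have "card (sym_diff b a) = card (sym_diff a c) - 1"
      using b(2,3) card_Diff_subset fin_bc by metis
    moreover have "card (sym_diff a c) \<ge> 1" using b(2,3) fin_ac card_mono by metis
    ultimately have "card (sym_diff c a) = Suc (card (sym_diff b a))"
      by (simp add: sym_diff_commute)
    moreover have "connected_by (insert c C) b a (card (sym_diff b a))"
      using connected_by_mono[OF _ walk_ba] by blast
    ultimately show ?thesis
      using b(2) connected_by_Suc_iff by (metis insertI1 sym_diff_commute)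
  qed
  show ?thesis
    unfolding isometric_iff
  proof (intro ballI)
    fix x y assume "x \<in> insert c C" "y \<in> insert c C"
    then consider "x \<in> C" "y \<in> C" | "x = c" "y = c" | "x = c" "y \<in> C" | "x \<in> C" "y = c"
      by blast
    then show "connected_by (insert c C) x y (card (sym_diff x y))"
    proof cases
      case 1
      then show ?thesis using iso connected_by_mono unfolding isometric_iff by blast
    next
      case 2
      then show ?thesis by (simp add: connected_by_refl)
    next
      case 3
      then show ?thesis using from_c by blast
    next
      case 4
      then show ?thesis using from_c connected_by_commute sym_diff_commute by metis
    qed
  qed
qed

lemma steps_towards_if_isometric_insert:
  assumes iso: "isometric (insert c C)" and new: "c \<notin> C"
  shows "steps_towards C c"
  unfolding steps_towards_def
proof
  fix a assume a: "a \<in> C"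
  have walk: "connected_by (insert c C) c a (card (sym_diff c a))"
    using iso a unfolding isometric_iff by blast
  have fin: "finite (sym_diff c a)" using connected_by_card_sym_diff[OF walk] by blast
  have "sym_diff c a \<noteq> {}" using a new sym_diff_eq_empty_iff by metis
  then obtain d where d: "card (sym_diff c a) = Suc d"
    using fin card_0_eq not0_implies_Suc by metis
  then obtain p where p: "card (sym_diff c p) = 1" "connected_by (insert c C) p a d"
    using walk[unfolded d] connected_by_Suc_iff by blast
  have "p \<noteq> c" using p(1) by auto
  then have "p \<in> C" using connected_by_in[OF p(2)] by blast
  moreover have "sym_diff p c \<subseteq> sym_diff a c"
  proof (rule ccontr)
    obtain e where e: "sym_diff p c = {e}" using p(1) sym_diff_commute card_1_singletonE by metis
    assume "\<not> sym_diff p c \<subseteq> sym_diff a c"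
    then have e_new: "e \<notin> sym_diff c a" using e by auto
    have "sym_diff p a = insert e (sym_diff c a)"
    proof (intro set_eqI)
      fix x
      have "x \<in> sym_diff p c \<longleftrightarrow> x = e" unfolding e by (rule singleton_iff)
      then show "x \<in> sym_diff p a \<longleftrightarrow> x \<in> insert e (sym_diff c a)"
        using e_new by blast
    qed
    then have "card (sym_diff p a) = Suc (Suc d)" using d fin e_new by simp
    then show False using connected_by_card_sym_diff[OF p(2)] by simp
  qed
  moreover have "card (sym_diff p c) = 1" using p(1) sym_diff_commute by metis
  ultimately show "\<exists>b\<in>C. card (sym_diff b c) = 1 \<and> sym_diff b c \<subseteq> sym_diff a c"
    by (intro bexI[of _ p] conjI)
qed

lemma facet_of_vertex_of:
  assumes "\<sigma> \<in> cross_facets X"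
  shows "facet_of X (vertex_of \<sigma>) = \<sigma>"
proof (rule set_eqI)
  fix p :: "'a \<times> bool"
  obtain x t where p: "p = (x, t)" by (cases p)
  show "p \<in> facet_of X (vertex_of \<sigma>) \<longleftrightarrow> p \<in> \<sigma>"
    using assms unfolding p cross_facets_def facet_of_def vertex_of_def by (cases t) auto
qed

lemma vertex_of_subset: "\<sigma> \<in> cross_facets X \<Longrightarrow> vertex_of \<sigma> \<subseteq> X"
  unfolding cross_facets_def vertex_of_def by auto

lemma vertex_of_facet_of: "c \<subseteq> X \<Longrightarrow> vertex_of (facet_of X c) = c"
  unfolding facet_of_def vertex_of_def by auto

lemma facet_of_in_cross_facets: "facet_of X c \<in> cross_facets X"
  unfolding facet_of_def cross_facets_def by auto

lemma finite_facet_of: "finite X \<Longrightarrow> finite (facet_of X c)"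
  unfolding facet_of_def by auto

lemma Int_facet_of: "facet_of X a \<inter> facet_of X b = (\<lambda>x. (x, x \<in> a)) ` (X - sym_diff a b)"
  unfolding facet_of_def by auto

lemma card_Int_facet_of:
  assumes "finite X" "a \<subseteq> X" "b \<subseteq> X"
  shows "card (facet_of X a \<inter> facet_of X b) = card X - card (sym_diff a b)"
proof -
  have "card (facet_of X a \<inter> facet_of X b) = card (X - sym_diff a b)"
    unfolding Int_facet_of by (rule card_image) (auto intro: inj_onI)
  also have "\<dots> = card X - card (sym_diff a b)"
    using assms by (intro card_Diff_subset) (auto intro: finite_subset)
  finally show ?thesis .
qed

lemma Int_facet_of_subset_iff:
  assumes "b \<subseteq> X" "c \<subseteq> X"
  shows "facet_of X a \<inter> facet_of X c \<subseteq> facet_of X b \<inter> facet_of X c \<longleftrightarrow>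
    sym_diff b c \<subseteq> sym_diff a c"
proof
  assume incl: "facet_of X a \<inter> facet_of X c \<subseteq> facet_of X b \<inter> facet_of X c"
  show "sym_diff b c \<subseteq> sym_diff a c"
  proof
    fix x assume x: "x \<in> sym_diff b c"
    show "x \<in> sym_diff a c"
    proof (rule ccontr)
      assume "x \<notin> sym_diff a c"
      then have "(x, x \<in> c) \<in> facet_of X a \<inter> facet_of X c"
        using x assms unfolding facet_of_def by auto
      then have "(x, x \<in> c) \<in> facet_of X b" using incl by blast
      then show False using x unfolding facet_of_def by auto
    qed
  qed
next
  assume "sym_diff b c \<subseteq> sym_diff a c"
  then show "facet_of X a \<inter> facet_of X c \<subseteq> facet_of X b \<inter> facet_of X c"
    unfolding facet_of_def by auto
qed

lemma pure_codim1_facet_link_iff: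
  assumes fin: "finite X" and c: "c \<subseteq> X" and C: "C \<subseteq> Pow X" and new: "c \<notin> C"
  shows "pure_codim1 (card X) (Pow (facet_of X c) \<inter> (\<Union>a\<in>C. Pow (facet_of X a)))
    \<longleftrightarrow> steps_towards C c"
    (is "pure_codim1 _ ?F \<longleftrightarrow> _")
proof
  assume pure: "pure_codim1 (card X) ?F"
  show "steps_towards C c"
    unfolding steps_towards_def
  proof
    fix a assume a: "a \<in> C"
    have "finite ?F" by (intro finite_Int disjI1) (simp add: finite_facet_of[OF fin])
    moreover have "facet_of X a \<inter> facet_of X c \<in> ?F" using a by blast
    ultimately obtain S where S: "S \<in> ?F" "facet_of X a \<inter> facet_of X c \<subseteq> S"
        and S_max: "\<forall>T\<in>?F. S \<subseteq> T \<longrightarrow> S = T"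
      by (elim finite_has_maximal2[THEN bexE] conjE)
    then obtain b where b: "b \<in> C" "S \<subseteq> facet_of X b \<inter> facet_of X c" by blast
    have bX: "b \<subseteq> X" using b(1) C by blast
    have "facet_of X b \<inter> facet_of X c \<in> ?F" using b(1) by blast
    then have S_eq: "S = facet_of X b \<inter> facet_of X c" using S_max b(2) by blast
    have "card S = card X - 1"
      using pure S(1) S_max unfolding pure_codim1_def by (simp add: eq_commute)
    then have "card X - card (sym_diff b c) = card X - 1"
      unfolding S_eq card_Int_facet_of[OF fin bX c] .
    moreover have fin_bc: "finite (sym_diff b c)" using fin bX c by (simp add: finite_subset)
    then have "card (sym_diff b c) \<le> card X" using fin bX c by (intro card_mono) auto
    moreover have "b \<noteq> c" using b(1) new by blast
    then have "card (sym_diff b c) \<noteq> 0" using fin_bc sym_diff_eq_empty_iff by simp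
    ultimately have "card (sym_diff b c) = 1" by linarith
    moreover have "sym_diff b c \<subseteq> sym_diff a c"
      using S(2) b(2) Int_facet_of_subset_iff[OF bX c] by blast
    ultimately show "\<exists>b\<in>C. card (sym_diff b c) = 1 \<and> sym_diff b c \<subseteq> sym_diff a c"
      using b(1) by (intro bexI[of _ b] conjI)
  qed
next
  assume steps: "steps_towards C c"
  show "pure_codim1 (card X) ?F"
    unfolding pure_codim1_def
  proof (intro ballI impI)
    fix S assume S: "S \<in> ?F" and S_max: "\<forall>T\<in>?F. S \<subseteq> T \<longrightarrow> T = S"
    then obtain a where a: "a \<in> C" "S \<subseteq> facet_of X a \<inter> facet_of X c" by blast
    then obtain b where b: "b \<in> C" "card (sym_diff b c) = 1" "sym_diff b c \<subseteq> sym_diff a c"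
      using steps unfolding steps_towards_def by blast
    have bX: "b \<subseteq> X" using b(1) C by blast
    have "S \<subseteq> facet_of X b \<inter> facet_of X c"
      using a(2) b(3) Int_facet_of_subset_iff[OF bX c] by blast
    moreover have "facet_of X b \<inter> facet_of X c \<in> ?F" using b(1) by blast
    ultimately have "S = facet_of X b \<inter> facet_of X c" using S_max by blast
    then show "card S = card X - 1" using card_Int_facet_of[OF fin bX c] b(2) by simp
  qed
qed

lemma set_take_Suc_nth: "j < length xs \<Longrightarrow> set (take (Suc j) xs) = insert (xs ! j) (set (take j xs))"
  by (simp add: take_Suc_conv_app_nth)

lemma nth_notin_set_take:
  assumes "distinct xs" "j < length xs"
  shows "xs ! j \<notin> set (take j xs)"
proof
  assume "xs ! j \<in> set (take j xs)"
  then obtain i where "i < j" "xs ! i = xs ! j" by (auto simp: in_set_conv_nth)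
  with assms show False by (simp add: nth_eq_iff_index_eq)
qed

lemma partial_shelling_map_facet_of_iff:
  assumes fin: "finite X" and cs: "set cs \<subseteq> Pow X"
  shows "partial_shelling X (map (facet_of X) cs) \<longleftrightarrow>
    distinct cs \<and> (\<forall>j. 1 \<le> j \<and> j < length cs \<longrightarrow> steps_towards (set (take j cs)) (cs ! j))"
proof -
  have "inj_on (facet_of X) (set cs)"
  proof (rule inj_onI)
    fix a b assume ab: "a \<in> set cs" "b \<in> set cs" and eq: "facet_of X a = facet_of X b"
    have "a \<subseteq> X" "b \<subseteq> X" using ab cs by auto
    then show "a = b" using eq vertex_of_facet_of by metis
  qed
  then have distinct_iff: "distinct (map (facet_of X) cs) \<longleftrightarrow> distinct cs"
    by (simp add: distinct_map)
  have link_iff: "pure_codim1 (card X)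
      (Pow (map (facet_of X) cs ! j) \<inter> (\<Union>i<j. Pow (map (facet_of X) cs ! i)))
    \<longleftrightarrow> steps_towards (set (take j cs)) (cs ! j)"
    if "distinct cs" "j < length cs" for j
  proof -
    have "set (take j cs) = (!) cs ` {..<j}"
      using that(2) nth_image[of j cs] by (simp add: atLeast0LessThan)
    then have "(\<Union>i<j. Pow (map (facet_of X) cs ! i)) = (\<Union>a\<in>set (take j cs). Pow (facet_of X a))"
      using that(2) by (simp add: SUP_image)
    moreover have "cs ! j \<subseteq> X" using cs nth_mem[OF that(2)] by blast
    moreover have "set (take j cs) \<subseteq> Pow X" using set_take_subset cs by (rule subset_trans)
    ultimately show ?thesis
      using pure_codim1_facet_link_iff[OF fin _ _ nth_notin_set_take[OF that]] that(2) by simp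
  qed
  show ?thesis
    unfolding partial_shelling_def using distinct_iff link_iff
    by (auto simp: facet_of_in_cross_facets)
qed

lemma isometric_prefixes_iff_steps_towards:
  assumes "distinct cs"
  shows "(\<forall>j. 1 \<le> j \<and> j \<le> length cs \<longrightarrow> isometric (set (take j cs))) \<longleftrightarrow>
    (\<forall>j. 1 \<le> j \<and> j < length cs \<longrightarrow> steps_towards (set (take j cs)) (cs ! j))"
proof
  assume iso: "\<forall>j. 1 \<le> j \<and> j \<le> length cs \<longrightarrow> isometric (set (take j cs))"
  show "\<forall>j. 1 \<le> j \<and> j < length cs \<longrightarrow> steps_towards (set (take j cs)) (cs ! j)"
  proof (intro allI impI)
    fix j assume j: "1 \<le> j \<and> j < length cs"
    then have "isometric (insert (cs ! j) (set (take j cs)))"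
      using iso[rule_format, of "Suc j"] set_take_Suc_nth[of j cs] by simp
    then show "steps_towards (set (take j cs)) (cs ! j)"
      using steps_towards_if_isometric_insert nth_notin_set_take[OF assms] j by blast
  qed
next
  assume steps: "\<forall>j. 1 \<le> j \<and> j < length cs \<longrightarrow> steps_towards (set (take j cs)) (cs ! j)"
  have prefix_iso: "isometric (set (take (Suc j) cs))" if "j < length cs" for j
    using that
  proof (induction j)
    case 0
    then show ?case
      by (auto simp: take_Suc_conv_app_nth isometric_iff intro: connected_by_refl)
  next
    case (Suc j)
    then have "steps_towards (set (take (Suc j) cs)) (cs ! Suc j)" using steps by simp
    with Suc show ?case by (simp add: set_take_Suc_nth isometric_insert)
  qed
  show "\<forall>j. 1 \<le> j \<and> j \<le> length cs \<longrightarrow> isometric (set (take j cs))"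
  proof (intro allI impI)
    fix j assume "1 \<le> j \<and> j \<le> length cs"
    then obtain i where "j = Suc i" "i < length cs" by (cases j) auto
    then show "isometric (set (take j cs))" using prefix_iso by blast
  qed
qed

lemma isometric_prefixes_if_partial_shelling:
  assumes fin: "finite X" and shelling: "partial_shelling X \<sigma>s" and j: "1 \<le> j" "j \<le> length \<sigma>s"
  shows "isometric (set (take j (map vertex_of \<sigma>s)))"
proof -
  let ?cs = "map vertex_of \<sigma>s"
  have facets: "set \<sigma>s \<subseteq> cross_facets X" using shelling unfolding partial_shelling_def by blast
  then have "map (facet_of X) ?cs = \<sigma>s" by (simp add: map_idI facet_of_vertex_of subset_iff)
  moreover have cs: "set ?cs \<subseteq> Pow X" using facets vertex_of_subset by auto
  ultimately have "distinct ?cs \<and>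
      (\<forall>j. 1 \<le> j \<and> j < length ?cs \<longrightarrow> steps_towards (set (take j ?cs)) (?cs ! j))"
    using shelling partial_shelling_map_facet_of_iff[OF fin cs] by simp
  then have "\<forall>j. 1 \<le> j \<and> j \<le> length ?cs \<longrightarrow> isometric (set (take j ?cs))"
    using isometric_prefixes_iff_steps_towards by blast
  with j show ?thesis by simp
qed

lemma partial_shelling_if_isometric_prefixes:
  assumes "finite X" "set cs \<subseteq> Pow X" "distinct cs"
    and "\<forall>j. 1 \<le> j \<and> j \<le> length cs \<longrightarrow> isometric (set (take j cs))"
  shows "partial_shelling X (map (facet_of X) cs)"
  unfolding partial_shelling_map_facet_of_iff[OF assms(1,2)]
  using assms(3,4) isometric_prefixes_iff_steps_towards[OF assms(3)] by blast

theorem proposition4p3: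
  fixes X :: "'a set"
  assumes "finite X"
  shows "(\<forall>\<sigma>s. partial_shelling X \<sigma>s \<longrightarrow>
            (\<forall>j. 1 \<le> j \<and> j \<le> length \<sigma>s \<longrightarrow> isometric (set (take j (map vertex_of \<sigma>s)))))
       \<and> (\<forall>C cs. C \<subseteq> Pow X \<and> isometric C \<and> distinct cs \<and> set cs = C \<and>
            (\<forall>j. 1 \<le> j \<and> j \<le> length cs \<longrightarrow> isometric (set (take j cs)))
            \<longrightarrow> partial_shelling X (map (facet_of X) cs))"
  using isometric_prefixes_if_partial_shelling[OF assms]
    partial_shelling_if_isometric_prefixes[OF assms] by blast

end
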